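(* Let $A$ be a set and let $\mathcal{E}$ be a set of subsets of $A$ such that (C1) for every $K\subseteq A$, $K\in\mathcal{E}$ if and only if $A\setminus K\notin\mathcal{E}$; and (C2) if $K\in\mathcal{E}$ and $K\subseteq L\subseteq A$, then $L\in\mathcal{E}$. Suppose each member of $A$ chooses one of the six strict total orders on three candidates $a,b,c$, labelled by $\mathbb{Z}/6\mathbb{Z}$ as: $1: a>b>c$, $2: a>c>b$, $3: c>a>b$, $4: c>b>a$, $5: b>c>a$, $6: b>a>c$. For $p\in\mathbb{Z}/6\mathbb{Z}$ let $K(p)$ be the set of members who chose ranking $p$, and $K(p,q,r)=K(p)\cup K(q)\cup K(r)$. Define the collective preference by: for distinct candidates $x,y$, $x$ is collectively preferred to $y$ iff the set of members who rank $x$ above $y$ belongs to $\mathcal{E}$. If (V) there exists $p$ such that $K(p,p+1,p+2)\in\mathcal{E}$ and $K(p+1,p+2,p+3)\in\mathcal{E}$, then the collective preference is a strict total order on $\{a,b,c\}$.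
   Context: Indices are taken modulo $6$. By (C1), for each pair of distinct candidates exactly one of the two collective preferences holds. *)

theory Defs
  imports Main
begin

datatype cand = Ca | Cb | Cc

text \<open>Score of a candidate in ranking with label p (labels taken modulo 6;
  label 6 is represented by residue 0).\<close>
fun score :: "int \<Rightarrow> cand \<Rightarrow> nat" where
  "score p x =
    (let q = p mod 6 in
     if q = 1 then (case x of Ca \<Rightarrow> 2 | Cb \<Rightarrow> 1 | Cc \<Rightarrow> 0)
     else if q = 2 then (case x of Ca \<Rightarrow> 2 | Cc \<Rightarrow> 1 | Cb \<Rightarrow> 0)
     else if q = 3 then (case x of Cc \<Rightarrow> 2 | Ca \<Rightarrow> 1 | Cb \<Rightarrow> 0)
     else if q = 4 then (case x of Cc \<Rightarrow> 2 | Cb \<Rightarrow> 1 | Ca \<Rightarrow> 0)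
     else if q = 5 then (case x of Cb \<Rightarrow> 2 | Cc \<Rightarrow> 1 | Ca \<Rightarrow> 0)
     else (case x of Cb \<Rightarrow> 2 | Ca \<Rightarrow> 1 | Cc \<Rightarrow> 0))"

definition ranks_above :: "int \<Rightarrow> cand \<Rightarrow> cand \<Rightarrow> bool" where
  "ranks_above p x y \<longleftrightarrow> score p x > score p y"

definition Kset :: "'v set \<Rightarrow> ('v \<Rightarrow> int) \<Rightarrow> int \<Rightarrow> 'v set" where
  "Kset A ch p = {v \<in> A. ch v mod 6 = p mod 6}"

definition K3 :: "'v set \<Rightarrow> ('v \<Rightarrow> int) \<Rightarrow> int \<Rightarrow> int \<Rightarrow> int \<Rightarrow> 'v set" where
  "K3 A ch p q r = Kset A ch p \<union> Kset A ch q \<union> Kset A ch r"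

definition coll_pref :: "'v set \<Rightarrow> 'v set set \<Rightarrow> ('v \<Rightarrow> int) \<Rightarrow> cand rel" where
  "coll_pref A E ch = {(x, y). x \<noteq> y \<and> {v \<in> A. ranks_above (ch v) x y} \<in> E}"

end

theory Submission
  imports Defs
begin

text \<open>By (C1) the collective preference is a tournament on three candidates, so it can only
  fail to be transitive by being a 3-cycle. Each K(p, p+1, p+2) is exactly the set of members
  ranking some x above some y, and for two consecutive triples the two pairs share their
  winner or their loser. Hence (V) yields a candidate that collectively beats both others or
  loses to both, which excludes a cycle.\<close>

lemma trans_if_beats_all_others:
  assumes "asym R" and "Field R \<subseteq> {x, y, z}" and "(x, y) \<in> R" and "(x, z) \<in> R"
  shows "trans R"
proof (rule transI)
  fix a b c assume ab: "(a, b) \<in> R" and bc: "(b, c) \<in> R"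
  have "a \<in> {x, y, z}" "b \<in> {x, y, z}" "c \<in> {x, y, z}"
    using ab bc assms(2) by (auto intro: FieldI1 FieldI2)
  then show "(a, c) \<in> R"
    using assms(1,3,4) ab bc by (auto dest: asymD)
qed

lemma trans_if_loses_to_all_others:
  assumes "asym R" and "Field R \<subseteq> {x, y, z}" and "(y, x) \<in> R" and "(z, x) \<in> R"
  shows "trans R"
proof -
  have "trans (R\<inverse>)"
    by (rule trans_if_beats_all_others[of _ x y z]) (use assms in auto)
  then show ?thesis by simp
qed

definition supporters :: "'v set \<Rightarrow> ('v \<Rightarrow> int) \<Rightarrow> cand \<Rightarrow> cand \<Rightarrow> 'v set" where
  "supporters A ch x y = {v \<in> A. ranks_above (ch v) x y}"

lemma ranks_above_swap: "x \<noteq> y \<Longrightarrow> ranks_above p y x \<longleftrightarrow> \<not> ranks_above p x y"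
  unfolding ranks_above_def by (cases x; cases y; simp add: Let_def)

lemma supporters_swap:
  assumes "x \<noteq> y" shows "supporters A ch y x = A - supporters A ch x y"
  unfolding supporters_def by (auto simp: ranks_above_swap[OF assms])

lemma mod6_cases: "(p::int) mod 6 \<in> {0, 1, 2, 3, 4, 5}"
  by auto

lemma K3_consecutive_eq:
  "K3 A ch p (p + 1) (p + 2) =
    {v \<in> A. ch v mod 6 \<in> {p mod 6, (p mod 6 + 1) mod 6, (p mod 6 + 2) mod 6}}"
  unfolding K3_def Kset_def by (auto simp: mod_add_left_eq)

lemma K3_consecutive_eq_supporters:
  "p mod 6 = 0 \<Longrightarrow> K3 A ch p (p + 1) (p + 2) = supporters A ch Ca Cc"
  "p mod 6 = 1 \<Longrightarrow> K3 A ch p (p + 1) (p + 2) = supporters A ch Ca Cb"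
  "p mod 6 = 2 \<Longrightarrow> K3 A ch p (p + 1) (p + 2) = supporters A ch Cc Cb"
  "p mod 6 = 3 \<Longrightarrow> K3 A ch p (p + 1) (p + 2) = supporters A ch Cc Ca"
  "p mod 6 = 4 \<Longrightarrow> K3 A ch p (p + 1) (p + 2) = supporters A ch Cb Ca"
  "p mod 6 = 5 \<Longrightarrow> K3 A ch p (p + 1) (p + 2) = supporters A ch Cb Cc"
  unfolding K3_consecutive_eq supporters_def ranks_above_def
  by (auto simp: Let_def dest: mod6_cases[THEN subsetD[rotated]])

lemma K3_consecutive_share_candidate:
  obtains x y z where "distinct [x, y, z]"
    and "K3 A ch p (p + 1) (p + 2) = supporters A ch x y \<and>
         K3 A ch (p + 1) (p + 2) (p + 3) = supporters A ch x z \<or>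
         K3 A ch p (p + 1) (p + 2) = supporters A ch y x \<and>
         K3 A ch (p + 1) (p + 2) (p + 3) = supporters A ch z x"
proof -
  have next_mod: "(p + 1) mod 6 = (p mod 6 + 1) mod 6"
    by (simp add: mod_add_left_eq)
  have next_K3: "K3 A ch (p + 1) (p + 2) (p + 3) = K3 A ch (p + 1) (p + 1 + 1) (p + 1 + 2)"
    by (simp add: add.assoc)
  note eqs = K3_consecutive_eq_supporters[of p A ch]
    K3_consecutive_eq_supporters[of "p + 1" A ch, unfolded next_mod, folded next_K3]
  consider "p mod 6 = 0" | "p mod 6 = 1" | "p mod 6 = 2" | "p mod 6 = 3" | "p mod 6 = 4" | "p mod 6 = 5"
    using mod6_cases[of p] by blast
  then show thesis
  proof cases
    case 1 then show thesis by (intro that[of Ca Cc Cb]) (use eqs in simp_all)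
  next
    case 2 then show thesis by (intro that[of Cb Ca Cc]) (use eqs in simp_all)
  next
    case 3 then show thesis by (intro that[of Cc Cb Ca]) (use eqs in simp_all)
  next
    case 4 then show thesis by (intro that[of Ca Cc Cb]) (use eqs in simp_all)
  next
    case 5 then show thesis by (intro that[of Cb Ca Cc]) (use eqs in simp_all)
  next
    case 6 then show thesis by (intro that[of Cc Cb Ca]) (use eqs in simp_all)
  qed
qed

lemma UNIV_cand_eq: "distinct [x, y, z] \<Longrightarrow> UNIV = {x, y, z :: cand}"
  by (cases x; cases y; cases z) (auto intro: cand.exhaust)

lemma coll_pref_iff: "(x, y) \<in> coll_pref A E ch \<longleftrightarrow> x \<noteq> y \<and> supporters A ch x y \<in> E"
  unfolding coll_pref_def supporters_def by simp

lemma coll_pref_swap: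
  assumes complement: "\<And>K. K \<subseteq> A \<Longrightarrow> K \<in> E \<longleftrightarrow> A - K \<notin> E" and "x \<noteq> y"
  shows "(y, x) \<in> coll_pref A E ch \<longleftrightarrow> (x, y) \<notin> coll_pref A E ch"
proof -
  have "supporters A ch x y \<subseteq> A"
    by (auto simp: supporters_def)
  then show ?thesis
    using complement[of "supporters A ch x y"] supporters_swap[of x y A ch] \<open>x \<noteq> y\<close>
    by (simp add: coll_pref_iff)
qed

lemma coll_pref_asym:
  assumes "\<And>K. K \<subseteq> A \<Longrightarrow> K \<in> E \<longleftrightarrow> A - K \<notin> E"
  shows "asym (coll_pref A E ch)"
proof (rule asymI)
  fix x y assume "(x, y) \<in> coll_pref A E ch"
  then show "(y, x) \<notin> coll_pref A E ch"
    using coll_pref_swap[OF assms, of x y] coll_pref_iff by blast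
qed

lemma coll_pref_total:
  assumes "\<And>K. K \<subseteq> A \<Longrightarrow> K \<in> E \<longleftrightarrow> A - K \<notin> E"
  shows "total (coll_pref A E ch)"
  unfolding total_on_def using coll_pref_swap[OF assms] by blast

theorem mainTheorem3:
  fixes A :: "'v set" and E :: "'v set set" and ch :: "'v \<Rightarrow> int"
  assumes E_sub: "E \<subseteq> Pow A"
    and C1: "\<And>K. K \<subseteq> A \<Longrightarrow> (K \<in> E \<longleftrightarrow> A - K \<notin> E)"
    and C2: "\<And>K L. K \<in> E \<Longrightarrow> K \<subseteq> L \<Longrightarrow> L \<subseteq> A \<Longrightarrow> L \<in> E"
    and V: "\<exists>p. K3 A ch p (p + 1) (p + 2) \<in> E \<and> K3 A ch (p + 1) (p + 2) (p + 3) \<in> E"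
  shows "strict_linear_order_on (UNIV :: cand set) (coll_pref A E ch)"
proof -
  let ?R = "coll_pref A E ch"
  obtain p where "K3 A ch p (p + 1) (p + 2) \<in> E" "K3 A ch (p + 1) (p + 2) (p + 3) \<in> E"
    using V by blast
  moreover obtain x y z where xyz: "distinct [x, y, z]"
    and "K3 A ch p (p + 1) (p + 2) = supporters A ch x y \<and>
         K3 A ch (p + 1) (p + 2) (p + 3) = supporters A ch x z \<or>
         K3 A ch p (p + 1) (p + 2) = supporters A ch y x \<and>
         K3 A ch (p + 1) (p + 2) (p + 3) = supporters A ch z x"
    by (rule K3_consecutive_share_candidate)
  ultimately have "(x, y) \<in> ?R \<and> (x, z) \<in> ?R \<or> (y, x) \<in> ?R \<and> (z, x) \<in> ?R"
    using xyz unfolding coll_pref_iff by (elim disjE) auto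
  moreover have "asym ?R"
    using C1 by (rule coll_pref_asym)
  moreover have "Field ?R \<subseteq> {x, y, z}"
    unfolding UNIV_cand_eq[OF xyz, symmetric] by (rule subset_UNIV)
  ultimately have "trans ?R"
    using trans_if_beats_all_others trans_if_loses_to_all_others by metis
  with \<open>asym ?R\<close> coll_pref_total[OF C1] show ?thesis
    unfolding strict_linear_order_on_def by simp
qed

end
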